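(* For each integer $i \ge 1$ let $X_i$ be the set of all positive integers $x$ with $\{x(\tfrac32)^i\} < \tfrac12$. Then $\bigcap_{i=1}^{\infty} X_i = \emptyset$; that is, there is no positive integer $x$ such that $\{x(\tfrac32)^n\} < \tfrac12$ for all integers $n \ge 0$ (no positive integer is a Z-number).
   Context: For a real number $a$, $\{a\}$ denotes its fractional part, $a - \lfloor a\rfloor$. A Z-number is a positive real number $x$ such that $0 \le \{x(\tfrac32)^n\} < \tfrac12$ for every integer $n\ge 0$. *)

theory Defs
  imports Complex_Main
begin

definition X :: "nat \<Rightarrow> nat set" where
  "X i = {x::nat. x > 0 \<and> frac (real x * (3/2)^i) < 1/2}"

definition Z_number :: "real \<Rightarrow> bool" where
  "Z_number x \<longleftrightarrow> x > 0 \<and> (\<forall>n::nat. 0 \<le> frac (x * (3/2)^n) \<and> frac (x * (3/2)^n) < 1/2)"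

end

theory Submission
  imports Defs "HOL-Computational_Algebra.Primes"
begin

(* Write x = m 2^k with m odd. Then x (3/2)^(k+1) = m 3^(k+1) / 2 is half an odd integer,
   so its fractional part is exactly 1/2: the exponent k + 1 violates the Z-number condition. *)

lemma frac_odd_half:
  assumes "odd n"
  shows "frac (real n / 2) = 1/2"
proof -
  obtain q where "n = 2 * q + 1"
    using assms oddE by blast
  then have "real n / 2 = real q + 1/2"
    by simp
  moreover have "frac (real q + 1/2) = 1/2"
    by (simp add: frac_def floor_eq_iff)
  ultimately show ?thesis
    by (simp only:)
qed

lemma frac_three_halves_power_eq_half:
  fixes x :: nat
  assumes "x > 0"
  obtains i where "i \<ge> 1" and "frac (real x * (3/2)^i) = 1/2"
proof -
  obtain k m where m: "\<not> 2 dvd m" and x: "x = m * 2^k"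
    using prime_power_canonical[OF two_is_prime_nat assms] by blast
  have "real x * (3/2)^Suc k = real (m * 3^Suc k) / 2"
    by (simp add: x power_divide field_simps)
  moreover have "odd (m * 3^Suc k)"
    using m by simp
  ultimately have "frac (real x * (3/2)^Suc k) = 1/2"
    using frac_odd_half by presburger
  then show ?thesis
    using that[of "Suc k"] by simp
qed

theorem theorem5p1:
  shows "(\<Inter>i\<in>{1::nat..}. X i) = {} \<and> \<not> (\<exists>x::nat. x > 0 \<and> Z_number (real x))"
proof
  show "(\<Inter>i\<in>{1::nat..}. X i) = {}"
  proof (rule equals0I)
    fix x
    assume x: "x \<in> (\<Inter>i\<in>{1::nat..}. X i)"
    then have "x > 0"
      by (auto simp: X_def)
    then obtain i where "i \<ge> 1" "frac (real x * (3/2)^i) = 1/2"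
      using frac_three_halves_power_eq_half by blast
    moreover from x \<open>i \<ge> 1\<close> have "x \<in> X i"
      by blast
    ultimately show False
      by (simp add: X_def)
  qed
  show "\<not> (\<exists>x::nat. x > 0 \<and> Z_number (real x))"
  proof
    assume "\<exists>x::nat. x > 0 \<and> Z_number (real x)"
    then obtain x :: nat where "x > 0" "Z_number (real x)"
      by blast
    moreover from \<open>x > 0\<close> obtain i where "frac (real x * (3/2)^i) = 1/2"
      using frac_three_halves_power_eq_half by blast
    ultimately show False
      unfolding Z_number_def by (metis less_irrefl)
  qed
qed

end
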